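(* Let $\mathbb{F}\in\{\mathbb{R},\mathbb{C}\}$, let $A$ be an $n\times m$ matrix over $\mathbb{F}$ and let $p,q,r,s,r',s'\in[1,\infty]$ with $\mathrm{sgn}(p-r')=\mathrm{sgn}(p-r)$ and $\mathrm{sgn}(q-s')=\mathrm{sgn}(q-s)$. If $$\|A\|_{r,s}= m^{[(1/p)-(1/r)]_+}\, n^{[(1/s)-(1/q)]_+}\,\|A\|_{p,q},$$ then also $$\|A\|_{r',s'}= m^{[(1/p)-(1/r')]_+}\, n^{[(1/s')-(1/q)]_+}\,\|A\|_{p,q}.$$
   Context: $\|x\|_p$ is the Hölder $\ell_p$ norm; $\|A\|_{p,q}=\max_{x\in\mathbb{F}^m,x\ne0}\|Ax\|_q/\|x\|_p$ (for real $A$ one may take $\mathbb{F}=\mathbb{R}$ or $\mathbb{C}$). $[z]_+=\max(z,0)$, $\mathrm{sgn}$ is the sign function, and $1/\infty=0$. *)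

theory Defs
  imports "HOL-Analysis.Analysis" "HOL-Library.Extended_Real"
begin

definition recip :: "ereal \<Rightarrow> real" where
  "recip p = (if p = \<infinity> then 0 else 1 / real_of_ereal p)"

definition lpnorm :: "ereal \<Rightarrow> ('a::real_normed_vector)^'n \<Rightarrow> real" where
  "lpnorm p x = (if p = \<infinity> then Max (range (\<lambda>i. norm (x $ i)))
                 else (\<Sum>i\<in>UNIV. norm (x $ i) powr real_of_ereal p) powr (1 / real_of_ereal p))"

definition opnorm :: "ereal \<Rightarrow> ereal \<Rightarrow> ('a::real_normed_field)^'m^'n \<Rightarrow> real" where
  "opnorm p q A = Sup {lpnorm q (A *v x) / lpnorm p x | x. x \<noteq> 0}"

definition sgn_diff :: "ereal \<Rightarrow> ereal \<Rightarrow> int" where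
  "sgn_diff a b = (if a < b then -1 else if a = b then 0 else 1)"

definition pos_part :: "real \<Rightarrow> real" where
  "pos_part z = max z 0"

end

theory Submission
  imports Defs
begin

(* For a nonnegative vector a with n entries, ||a||_p <= n^[1/p - 1/r]_+ ||a||_r, and the equality
   cases depend only on the sign of p - r: a constant if p < r, at most one nonzero entry if p > r,
   every a if p = r. Bounding ||Ax||_s / ||x||_r through ||Ax||_q / ||x||_p gives
   ||A||_{r,s} <= m^[1/p - 1/r]_+ n^[1/s - 1/q]_+ ||A||_{p,q}. If this is an equality, a maximiser x
   of the (r,s) ratio makes both comparisons tight (for x and for Ax) and maximises the (p,q) ratio.
   By the sign hypotheses the comparisons remain tight for r' and s', so x attains the corresponding
   bound for ||A||_{r',s'}, which is the reverse of the general inequality. *)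

lemma powr_tangent_at_one:
  fixes k t :: real
  assumes k: "k > 1" and t: "t \<ge> 0"
  shows powr_gt_tangent_at_one: "t \<noteq> 1 \<Longrightarrow> 1 + k * (t - 1) < t powr k"
    and powr_ge_tangent_at_one: "1 + k * (t - 1) \<le> t powr k"
proof -
  have deriv: "\<And>x. x > 0 \<Longrightarrow> ((\<lambda>z. z powr k) has_real_derivative k * x powr (k - 1)) (at x)"
    by (rule has_real_derivative_powr)
  show strict: "1 + k * (t - 1) < t powr k" if "t \<noteq> 1"
  proof -
    consider "t = 0" | "0 < t" "t < 1" | "t > 1" using t \<open>t \<noteq> 1\<close> by linarith
    then show ?thesis
    proof cases
      case 1
      then show ?thesis using k by simp
    next
      case 2
      obtain z where z: "t < z" "z < 1" "1 powr k - t powr k = (1 - t) * (k * z powr (k - 1))"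
        using MVT2[of t 1 "\<lambda>z. z powr k" "\<lambda>x. k * x powr (k - 1)"] 2 deriv by force
      have "z powr (k - 1) < 1 powr (k - 1)"
        using z 2 k by (intro powr_less_mono2) auto
      then have "(1 - t) * (k * z powr (k - 1)) < (1 - t) * k" using 2 k by simp
      then show ?thesis using z by (simp add: algebra_simps)
    next
      case 3
      obtain z where z: "1 < z" "z < t" "t powr k - 1 powr k = (t - 1) * (k * z powr (k - 1))"
        using MVT2[of 1 t "\<lambda>z. z powr k" "\<lambda>x. k * x powr (k - 1)"] 3 deriv by force
      have "z powr 0 < z powr (k - 1)"
        using z k by (intro powr_less_mono) auto
      then have "(t - 1) * k < (t - 1) * (k * z powr (k - 1))" using 3 k z by simp
      then show ?thesis using z by (simp add: algebra_simps)
    qed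
  qed
  show "1 + k * (t - 1) \<le> t powr k"
    by (cases "t = 1") (auto dest: strict)
qed

lemma card_le_sum_powr_if_sum_eq_card:
  fixes t :: "'n::finite \<Rightarrow> real"
  assumes t: "\<And>i. t i \<ge> 0" and sum_t: "(\<Sum>i\<in>UNIV. t i) = real CARD('n)" and k: "k > 1"
  shows "real CARD('n) \<le> (\<Sum>i\<in>UNIV. t i powr k)"
    and "t i \<noteq> 1 \<Longrightarrow> real CARD('n) < (\<Sum>i\<in>UNIV. t i powr k)"
proof -
  have tangents: "(\<Sum>i\<in>UNIV. 1 + k * (t i - 1)) = real CARD('n)"
    by (simp add: sum.distrib sum_subtractf sum_distrib_left[symmetric] sum_t)
  show "real CARD('n) \<le> (\<Sum>i\<in>UNIV. t i powr k)"
    unfolding tangents[symmetric]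
    by (rule sum_mono) (use powr_ge_tangent_at_one[OF k t] in auto)
  show "real CARD('n) < (\<Sum>i\<in>UNIV. t i powr k)" if "t i \<noteq> 1"
    unfolding tangents[symmetric]
    by (rule sum_strict_mono_ex1)
       (use powr_ge_tangent_at_one[OF k t] powr_gt_tangent_at_one[OF k t that] in auto)
qed

lemma entry_le_sum_powr_root:
  fixes a :: "'n::finite \<Rightarrow> real"
  assumes a: "\<And>i. a i \<ge> 0" and p: "p > 0"
  shows "a i \<le> (\<Sum>j\<in>UNIV. a j powr p) powr (1/p)"
proof -
  have "a i powr p \<le> (\<Sum>j\<in>UNIV. a j powr p)"
    by (rule member_le_sum) auto
  then have "(a i powr p) powr (1/p) \<le> (\<Sum>j\<in>UNIV. a j powr p) powr (1/p)"
    using p by (intro powr_mono2) auto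
  then show ?thesis using a p by (simp add: powr_powr)
qed

lemma entry_less_sum_powr_root:
  fixes a :: "'n::finite \<Rightarrow> real"
  assumes a: "\<And>i. a i \<ge> 0" and p: "p > 0" and "j \<noteq> i" "a j > 0"
  shows "a i < (\<Sum>k\<in>UNIV. a k powr p) powr (1/p)"
proof -
  have "a i powr p + a j powr p = (\<Sum>k\<in>{i,j}. a k powr p)" using \<open>j \<noteq> i\<close> by simp
  also have "\<dots> \<le> (\<Sum>k\<in>UNIV. a k powr p)"
    by (rule sum_mono2) auto
  finally have "a i powr p < (\<Sum>k\<in>UNIV. a k powr p)"
    using powr_gt_zero[of "a j" p] \<open>a j > 0\<close> by linarith
  then have "(a i powr p) powr (1/p) < (\<Sum>k\<in>UNIV. a k powr p) powr (1/p)"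
    using p by (intro powr_less_mono2) auto
  then show ?thesis using a p by (simp add: powr_powr)
qed

lemma Max_le_sum_powr_root:
  fixes a :: "'n::finite \<Rightarrow> real"
  assumes a: "\<And>i. a i \<ge> 0" and p: "p > 0"
  shows "Max (range a) \<le> (\<Sum>i\<in>UNIV. a i powr p) powr (1/p)"
    and "i \<noteq> j \<Longrightarrow> a i > 0 \<Longrightarrow> a j > 0 \<Longrightarrow> Max (range a) < (\<Sum>i\<in>UNIV. a i powr p) powr (1/p)"
proof -
  have "Max (range a) \<in> range a" by (rule Max_in) auto
  then obtain k where k: "Max (range a) = a k" by blast
  show "Max (range a) \<le> (\<Sum>i\<in>UNIV. a i powr p) powr (1/p)"
    using k entry_le_sum_powr_root[OF a p] by simp
  assume "i \<noteq> j" "a i > 0" "a j > 0"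
  then obtain l where "l \<noteq> k" "a l > 0" by metis
  then show "Max (range a) < (\<Sum>i\<in>UNIV. a i powr p) powr (1/p)"
    using k entry_less_sum_powr_root[OF a p] by simp
qed

text \<open>Writing \<open>M\<close> for the \<open>\<ell>\<^sub>p\<close> norm, \<open>a\<^sub>k\<^sup>r \<le> a\<^sub>k\<^sup>p M\<^sup>r\<^sup>-\<^sup>p\<close> termwise,
  strictly so for an entry below \<open>M\<close>.\<close>
lemma sum_powr_root_antimono:
  fixes a :: "'n::finite \<Rightarrow> real"
  assumes a: "\<And>i. a i \<ge> 0" and pr: "0 < p" "p < r"
  shows "(\<Sum>i\<in>UNIV. a i powr r) powr (1/r) \<le> (\<Sum>i\<in>UNIV. a i powr p) powr (1/p)"
    and "i \<noteq> j \<Longrightarrow> a i > 0 \<Longrightarrow> a j > 0 \<Longrightarrow>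
         (\<Sum>i\<in>UNIV. a i powr r) powr (1/r) < (\<Sum>i\<in>UNIV. a i powr p) powr (1/p)"
proof -
  define M where "M = (\<Sum>i\<in>UNIV. a i powr p) powr (1/p)"
  have "(\<Sum>i\<in>UNIV. a i powr p) = M powr p"
    using pr by (simp add: M_def powr_powr sum_nonneg)
  then have bound_sum: "(\<Sum>k\<in>UNIV. a k powr p * M powr (r - p)) = M powr r"
    by (simp add: sum_distrib_right[symmetric] powr_add[symmetric])
  have factor: "a k powr r = a k powr p * a k powr (r - p)" for k
    by (simp add: powr_add[symmetric])
  have termwise: "a k powr r \<le> a k powr p * M powr (r - p)" for k
    unfolding factor using entry_le_sum_powr_root[OF a] pr a
    by (intro mult_left_mono powr_mono2) (auto simp: M_def)
  have root: "(M powr r) powr (1/r) = M" using pr by (simp add: M_def powr_powr)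
  have "(\<Sum>i\<in>UNIV. a i powr r) \<le> M powr r"
    unfolding bound_sum[symmetric] by (rule sum_mono) (rule termwise)
  from powr_mono2[OF _ _ this, of "1/r"]
  show "(\<Sum>i\<in>UNIV. a i powr r) powr (1/r) \<le> (\<Sum>i\<in>UNIV. a i powr p) powr (1/p)"
    using pr root by (simp add: M_def sum_nonneg)
  assume ij: "i \<noteq> j" "a i > 0" "a j > 0"
  have "a i < M" using entry_less_sum_powr_root[where a=a and i=i and j=j, OF a pr(1)] ij
    by (simp add: M_def)
  then have "a i powr r < a i powr p * M powr (r - p)"
    unfolding factor using pr ij by (intro mult_strict_left_mono powr_less_mono2) auto
  then have "(\<Sum>i\<in>UNIV. a i powr r) < M powr r"
    unfolding bound_sum[symmetric] by (intro sum_strict_mono_ex1) (use termwise in auto)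
  from powr_less_mono2[OF _ _ this, of "1/r"]
  show "(\<Sum>i\<in>UNIV. a i powr r) powr (1/r) < (\<Sum>i\<in>UNIV. a i powr p) powr (1/p)"
    using pr root by (simp add: M_def sum_nonneg)
qed

lemma sum_powr_root_rescaled:
  fixes a :: "'n::finite \<Rightarrow> real" and p r :: real
  defines "B \<equiv> (\<Sum>i\<in>UNIV. a i powr p)" and "N \<equiv> real CARD('n)"
  assumes "0 < p" "0 < r" "B > 0"
  shows "N powr (1/p - 1/r) * (\<Sum>i\<in>UNIV. a i powr r) powr (1/r)
           = B powr (1/p) * ((\<Sum>k\<in>UNIV. (a k powr p / (B / N)) powr (r/p)) / N) powr (1/r)"
proof -
  define S where "S = (\<Sum>k\<in>UNIV. (a k powr p / (B / N)) powr (r/p))"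
  have "N > 0" by (simp add: N_def)
  have "a k powr r = (B / N) powr (r/p) * (a k powr p / (B / N)) powr (r/p)" for k
    using assms \<open>N > 0\<close> by (simp add: powr_powr flip: powr_mult)
  then have "(\<Sum>i\<in>UNIV. a i powr r) = (B / N) powr (r/p) * S"
    by (simp add: S_def sum_distrib_left)
  then have "N powr (1/p - 1/r) * (\<Sum>i\<in>UNIV. a i powr r) powr (1/r)
      = N powr (1/p - 1/r) * ((B / N) powr (r/p) * S) powr (1/r)"
    by simp
  also have "\<dots> = N powr (1/p - 1/r) * (B / N) powr (1/p) * S powr (1/r)"
    using assms \<open>N > 0\<close> by (simp add: S_def sum_nonneg powr_mult powr_powr)
  also have "\<dots> = B powr (1/p) * (S / N) powr (1/r)"
    using assms \<open>N > 0\<close> by (simp add: powr_divide powr_diff)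
  finally show ?thesis by (simp add: S_def)
qed

text \<open>Power mean inequality, by the tangent line at \<open>1\<close> of \<open>t \<mapsto> t powr (r/p)\<close> applied to the
  entries \<open>a\<^sub>k\<^sup>p\<close> normalised to average \<open>1\<close>.\<close>
lemma sum_powr_root_le_card_powr:
  fixes a :: "'n::finite \<Rightarrow> real"
  assumes a: "\<And>i. a i \<ge> 0" and pr: "0 < p" "p < r"
  shows "(\<Sum>i\<in>UNIV. a i powr p) powr (1/p)
           \<le> real CARD('n) powr (1/p - 1/r) * (\<Sum>i\<in>UNIV. a i powr r) powr (1/r)"
    and "a i \<noteq> a j \<Longrightarrow> (\<Sum>i\<in>UNIV. a i powr p) powr (1/p)
           < real CARD('n) powr (1/p - 1/r) * (\<Sum>i\<in>UNIV. a i powr r) powr (1/r)"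
proof -
  define N where "N = real CARD('n)"
  define B where "B = (\<Sum>i\<in>UNIV. a i powr p)"
  define R where "R = N powr (1/p - 1/r) * (\<Sum>i\<in>UNIV. a i powr r) powr (1/r)"
  have "B powr (1/p) \<le> R \<and> (a i \<noteq> a j \<longrightarrow> B powr (1/p) < R)"
  proof (cases "B = 0")
    case True
    have "a k = 0" for k
    proof -
      have "a k powr p \<le> B" unfolding B_def by (rule member_le_sum) auto
      then show ?thesis using True by simp
    qed
    then show ?thesis using True by (simp add: R_def)
  next
    case False
    then have B: "B > 0" by (simp add: B_def sum_nonneg order_less_le)
    have N: "N > 0" by (simp add: N_def)
    define t where "t k = a k powr p / (B / N)" for k
    define S where "S = (\<Sum>k\<in>UNIV. t k powr (r/p))"
    have R: "R = B powr (1/p) * (S / N) powr (1/r)"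
      using sum_powr_root_rescaled[of p r a] pr B by (simp add: R_def S_def t_def B_def N_def)
    have t: "t k \<ge> 0" for k unfolding t_def using B N by (intro divide_nonneg_pos) auto
    have "(\<Sum>k\<in>UNIV. t k) = B / (B / N)"
      unfolding t_def B_def by (rule sum_divide_distrib[symmetric])
    then have sum_t: "(\<Sum>k\<in>UNIV. t k) = real CARD('n)" using B N by (simp add: N_def)
    have exponent: "r/p > 1" using pr by simp
    have "N \<le> S"
      using card_le_sum_powr_if_sum_eq_card(1)[OF t sum_t exponent] by (simp add: S_def N_def)
    then have "1 \<le> (S / N) powr (1/r)" using N pr by (simp add: ge_one_powr_ge_zero)
    then have le: "B powr (1/p) \<le> R" unfolding R using B by simp
    have "t i \<noteq> t j" if "a i \<noteq> a j"
    proof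
      assume "t i = t j"
      then have "(a i powr p) powr (1/p) = (a j powr p) powr (1/p)" using B N by (simp add: t_def)
      then show False using that a pr by (simp add: powr_powr)
    qed
    then have "N < S" if "a i \<noteq> a j"
      using that card_le_sum_powr_if_sum_eq_card(2)[OF t sum_t exponent] by (metis S_def N_def)
    then have "1 < (S / N) powr (1/r)" if "a i \<noteq> a j" using that N pr by (simp add: powr_less_one)
    with le show ?thesis unfolding R using B by simp
  qed
  then show "B powr (1/p) \<le> R" "a i \<noteq> a j \<Longrightarrow> B powr (1/p) < R"
    by (auto simp: B_def R_def N_def)
qed

lemma sum_powr_root_le_card_powr_Max:
  fixes a :: "'n::finite \<Rightarrow> real"
  assumes a: "\<And>i. a i \<ge> 0" and p: "0 < p"
  shows "(\<Sum>i\<in>UNIV. a i powr p) powr (1/p) \<le> real CARD('n) powr (1/p) * Max (range a)"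
    and "a i \<noteq> a j \<Longrightarrow>
         (\<Sum>i\<in>UNIV. a i powr p) powr (1/p) < real CARD('n) powr (1/p) * Max (range a)"
proof -
  define M where "M = Max (range a)"
  have le_M: "a k \<le> M" for k unfolding M_def by (rule Max_ge) auto
  have "M \<ge> 0" using le_M[of undefined] a[of undefined] by linarith
  then have root: "(real CARD('n) * M powr p) powr (1/p) = real CARD('n) powr (1/p) * M"
    using p by (simp add: powr_mult powr_powr)
  have termwise: "a k powr p \<le> M powr p" for k using le_M a p by (intro powr_mono2) auto
  have "(\<Sum>i\<in>UNIV. a i powr p) \<le> real CARD('n) * M powr p"
    using sum_mono[of UNIV "\<lambda>k. a k powr p" "\<lambda>k. M powr p"] termwise by simp
  from powr_mono2[OF _ _ this, of "1/p"]
  show "(\<Sum>i\<in>UNIV. a i powr p) powr (1/p) \<le> real CARD('n) powr (1/p) * Max (range a)"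
    using p root by (simp add: sum_nonneg M_def)
  assume "a i \<noteq> a j"
  then obtain k where "a k < M" using le_M by (metis order_less_le)
  then have "a k powr p < M powr p" using a p by (intro powr_less_mono2) auto
  then have "(\<Sum>i\<in>UNIV. a i powr p) < real CARD('n) * M powr p"
    using sum_strict_mono_ex1[of UNIV "\<lambda>k. a k powr p" "\<lambda>k. M powr p"] termwise by force
  from powr_less_mono2[OF _ _ this, of "1/p"]
  show "(\<Sum>i\<in>UNIV. a i powr p) powr (1/p) < real CARD('n) powr (1/p) * Max (range a)"
    using p root by (simp add: sum_nonneg M_def)
qed

definition lpnorm_fun :: "ereal \<Rightarrow> ('n::finite \<Rightarrow> real) \<Rightarrow> real" where
  "lpnorm_fun p a = (if p = \<infinity> then Max (range a)
                     else (\<Sum>i\<in>UNIV. a i powr real_of_ereal p) powr (1 / real_of_ereal p))"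

lemma lpnorm_eq_lpnorm_fun: "lpnorm p x = lpnorm_fun p (\<lambda>i. norm (x $ i))"
  by (simp add: lpnorm_def lpnorm_fun_def)

abbreviation lp_embedding_const :: "nat \<Rightarrow> ereal \<Rightarrow> ereal \<Rightarrow> real" where
  "lp_embedding_const n p r \<equiv> real n powr pos_part (recip p - recip r)"

lemma recip_strict_antimono: "0 < p \<Longrightarrow> p < r \<Longrightarrow> recip r < recip p"
  by (cases p; cases r) (auto simp: recip_def frac_less2)

lemma pos_part_recip_diff_less: "0 < p \<Longrightarrow> p < r \<Longrightarrow> pos_part (recip p - recip r) = recip p - recip r"
  using recip_strict_antimono[of p r] by (simp add: pos_part_def)

lemma pos_part_recip_diff_ge: "0 < r \<Longrightarrow> r \<le> p \<Longrightarrow> pos_part (recip p - recip r) = 0"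
  using recip_strict_antimono[of r p] by (cases "r = p") (auto simp: pos_part_def)

lemma sgn_diff_eq_iff: "sgn_diff a b = sgn_diff a c \<longleftrightarrow> (a < b \<longleftrightarrow> a < c) \<and> (b < a \<longleftrightarrow> c < a)"
  by (auto simp: sgn_diff_def)

lemma ereal_exponents_less_cases:
  assumes "0 < p" "p < r"
  obtains (infinite) p' where "p = ereal p'" "0 < p'" "r = \<infinity>"
    | (finite) p' r' where "p = ereal p'" "r = ereal r'" "0 < p'" "p' < r'"
  using assms by (cases p; cases r) auto

lemma lpnorm_fun_antimono:
  fixes a :: "'n::finite \<Rightarrow> real"
  assumes a: "\<And>i. a i \<ge> 0" and "0 < p" "p < r"
  shows "lpnorm_fun r a \<le> lpnorm_fun p a"
  using assms(2,3)
proof (cases rule: ereal_exponents_less_cases)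
  case (infinite p')
  then show ?thesis using Max_le_sum_powr_root(1)[OF a] by (simp add: lpnorm_fun_def)
next
  case (finite p' r')
  then show ?thesis using sum_powr_root_antimono(1)[OF a] by (simp add: lpnorm_fun_def)
qed

lemma lpnorm_fun_strict_antimono:
  fixes a :: "'n::finite \<Rightarrow> real"
  assumes a: "\<And>i. a i \<ge> 0" and "0 < p" "p < r" and "i \<noteq> j" "a i > 0" "a j > 0"
  shows "lpnorm_fun r a < lpnorm_fun p a"
  using assms(2,3)
proof (cases rule: ereal_exponents_less_cases)
  case (infinite p')
  then show ?thesis using Max_le_sum_powr_root(2)[OF a _ assms(4-6)] by (simp add: lpnorm_fun_def)
next
  case (finite p' r')
  then show ?thesis using sum_powr_root_antimono(2)[OF a _ _ assms(4-6)] by (simp add: lpnorm_fun_def)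
qed

lemma lpnorm_fun_le_card_powr:
  fixes a :: "'n::finite \<Rightarrow> real"
  assumes a: "\<And>i. a i \<ge> 0" and "0 < p" "p < r"
  shows "lpnorm_fun p a \<le> real CARD('n) powr (recip p - recip r) * lpnorm_fun r a"
  using assms(2,3)
proof (cases rule: ereal_exponents_less_cases)
  case (infinite p')
  then show ?thesis
    using sum_powr_root_le_card_powr_Max(1)[OF a] by (simp add: lpnorm_fun_def recip_def)
next
  case (finite p' r')
  then show ?thesis
    using sum_powr_root_le_card_powr(1)[OF a] by (simp add: lpnorm_fun_def recip_def)
qed

lemma lpnorm_fun_less_card_powr:
  fixes a :: "'n::finite \<Rightarrow> real"
  assumes a: "\<And>i. a i \<ge> 0" and "0 < p" "p < r" and "a i \<noteq> a j"
  shows "lpnorm_fun p a < real CARD('n) powr (recip p - recip r) * lpnorm_fun r a"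
  using assms(2,3)
proof (cases rule: ereal_exponents_less_cases)
  case (infinite p')
  then show ?thesis
    using sum_powr_root_le_card_powr_Max(2)[OF a _ assms(4)] by (simp add: lpnorm_fun_def recip_def)
next
  case (finite p' r')
  then show ?thesis
    using sum_powr_root_le_card_powr(2)[OF a _ _ assms(4)] by (simp add: lpnorm_fun_def recip_def)
qed

lemma lpnorm_fun_const:
  assumes "c \<ge> 0" "0 < p"
  shows "lpnorm_fun p (\<lambda>i::'n::finite. c) = real CARD('n) powr recip p * c"
  using assms by (cases p) (auto simp: lpnorm_fun_def recip_def powr_mult powr_powr)

lemma lpnorm_fun_single:
  fixes a :: "'n::finite \<Rightarrow> real"
  assumes zero: "\<And>i. i \<noteq> j \<Longrightarrow> a i = 0" and "a j \<ge> 0" "0 < p"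
  shows "lpnorm_fun p a = a j"
proof (cases p)
  case (real p')
  have "(\<Sum>i\<in>UNIV. a i powr p') = (\<Sum>i\<in>UNIV. if i = j then a j powr p' else 0)"
    by (rule sum.cong) (use zero in auto)
  then show ?thesis using real assms by (simp add: lpnorm_fun_def powr_powr)
next
  case PInf
  have "a i \<le> a j" for i using zero[of i] assms(2) by (cases "i = j") auto
  then have "Max (range a) = a j" by (intro Max_eqI) auto
  then show ?thesis using PInf by (simp add: lpnorm_fun_def)
qed (use assms in auto)

lemma lpnorm_fun_le_embedding_const:
  fixes a :: "'n::finite \<Rightarrow> real"
  assumes a: "\<And>i. a i \<ge> 0" and p: "0 < p" and r: "0 < r"
  shows "lpnorm_fun p a \<le> lp_embedding_const CARD('n) p r * lpnorm_fun r a"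
proof -
  consider "p < r" | "p = r" | "r < p" by fastforce
  then show ?thesis
  proof cases
    case 1
    then show ?thesis
      using lpnorm_fun_le_card_powr[where a=a, OF a p] by (simp add: pos_part_recip_diff_less p)
  next
    case 3
    then show ?thesis
      using lpnorm_fun_antimono[where a=a, OF a r] by (simp add: pos_part_recip_diff_ge r)
  qed (simp add: pos_part_def)
qed

lemma lpnorm_fun_eq_card_powr_iff:
  fixes a :: "'n::finite \<Rightarrow> real"
  assumes a: "\<And>i. a i \<ge> 0" and p: "0 < p" and "p < r"
  shows "lpnorm_fun p a = real CARD('n) powr (recip p - recip r) * lpnorm_fun r a \<longleftrightarrow>
         (\<forall>i j. a i = a j)"
proof
  assume "\<forall>i j. a i = a j"
  then have const: "a = (\<lambda>_. a undefined)" by metis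
  have "lpnorm_fun p a = real CARD('n) powr recip p * a undefined"
    "lpnorm_fun r a = real CARD('n) powr recip r * a undefined"
    by (subst const, rule lpnorm_fun_const, use a p \<open>p < r\<close> in simp_all)+
  then show "lpnorm_fun p a = real CARD('n) powr (recip p - recip r) * lpnorm_fun r a"
    by (simp add: powr_diff)
qed (use lpnorm_fun_less_card_powr[where a=a, OF a p \<open>p < r\<close>] in force)

lemma lpnorm_fun_eq_iff_single:
  fixes a :: "'n::finite \<Rightarrow> real"
  assumes a: "\<And>i. a i \<ge> 0" and r: "0 < r" and "r < p"
  shows "lpnorm_fun p a = lpnorm_fun r a \<longleftrightarrow> (\<forall>i j. i \<noteq> j \<longrightarrow> a i = 0 \<or> a j = 0)"
proof
  assume "\<forall>i j. i \<noteq> j \<longrightarrow> a i = 0 \<or> a j = 0"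
  then obtain j where "\<And>i. i \<noteq> j \<Longrightarrow> a i = 0"
    by (cases "\<exists>j. a j \<noteq> 0") auto
  then show "lpnorm_fun p a = lpnorm_fun r a"
    using lpnorm_fun_single a r \<open>r < p\<close> by (metis order.strict_trans)
next
  assume eq: "lpnorm_fun p a = lpnorm_fun r a"
  show "\<forall>i j. i \<noteq> j \<longrightarrow> a i = 0 \<or> a j = 0"
  proof (intro allI impI)
    fix i j :: 'n
    assume "i \<noteq> j"
    from lpnorm_fun_strict_antimono[where a=a, OF a r \<open>r < p\<close> this] eq a[of i] a[of j]
    show "a i = 0 \<or> a j = 0" by fastforce
  qed
qed

lemma lpnorm_fun_eq_embedding_const_iff:
  fixes a :: "'n::finite \<Rightarrow> real"
  assumes a: "\<And>i. a i \<ge> 0" and p: "0 < p" and r: "0 < r"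
  shows "lpnorm_fun p a = lp_embedding_const CARD('n) p r * lpnorm_fun r a \<longleftrightarrow>
         (p < r \<longrightarrow> (\<forall>i j. a i = a j)) \<and> (r < p \<longrightarrow> (\<forall>i j. i \<noteq> j \<longrightarrow> a i = 0 \<or> a j = 0))"
proof -
  consider "p < r" | "p = r" | "r < p" by fastforce
  then show ?thesis
  proof cases
    case 1
    then show ?thesis
      using lpnorm_fun_eq_card_powr_iff[OF a p 1] less_not_sym[OF 1]
      by (simp add: pos_part_recip_diff_less p)
  next
    case 3
    then show ?thesis
      using lpnorm_fun_eq_iff_single[OF a r 3] less_not_sym[OF 3]
      by (simp add: pos_part_recip_diff_ge r)
  qed (simp add: pos_part_def)
qed

lemma lpnorm_fun_eq_embedding_const_transfer:
  fixes a :: "'n::finite \<Rightarrow> real"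
  assumes a: "\<And>i. a i \<ge> 0" and "0 < p" "0 < r" "0 < p'" "0 < r'"
    and "p < r \<longleftrightarrow> p' < r'" "r < p \<longleftrightarrow> r' < p'"
    and "lpnorm_fun p a = lp_embedding_const CARD('n) p r * lpnorm_fun r a"
  shows "lpnorm_fun p' a = lp_embedding_const CARD('n) p' r' * lpnorm_fun r' a"
  using assms by (simp add: lpnorm_fun_eq_embedding_const_iff)

lemma continuous_on_Max:
  fixes f :: "'i \<Rightarrow> 'x::topological_space \<Rightarrow> real"
  assumes "finite I" "I \<noteq> {}" "\<And>i. i \<in> I \<Longrightarrow> continuous_on S (f i)"
  shows "continuous_on S (\<lambda>x. Max ((\<lambda>i. f i x) ` I))"
  using assms
proof (induction I rule: finite_ne_induct)
  case (insert i F)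
  then have "continuous_on S (\<lambda>x. max (f i x) (Max ((\<lambda>i. f i x) ` F)))"
    by (intro continuous_on_max) auto
  then show ?case using insert by simp
qed simp

lemma continuous_on_lpnorm:
  fixes f :: "'x::topological_space \<Rightarrow> 'a::real_normed_vector^'n::finite"
  assumes "0 < p" and f: "\<And>i. continuous_on S (\<lambda>x. f x $ i)"
  shows "continuous_on S (\<lambda>x. lpnorm p (f x))"
proof (cases p)
  case (real p')
  with assms have "continuous_on S (\<lambda>x. (\<Sum>i\<in>UNIV. norm (f x $ i) powr p') powr (1 / p'))"
    by (intro continuous_on_powr' continuous_on_sum continuous_intros f) (auto simp: sum_nonneg)
  then show ?thesis using real by (simp add: lpnorm_def)
next
  case PInf
  have "continuous_on S (\<lambda>x. Max ((\<lambda>i. norm (f x $ i)) ` UNIV))"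
    by (rule continuous_on_Max) (auto intro: continuous_on_norm f)
  then show ?thesis using PInf by (simp add: lpnorm_def)
qed (use assms in auto)

lemma lpnorm_nonneg: "0 \<le> lpnorm p x"
  by (auto simp: lpnorm_def Max_ge_iff)

lemma lpnorm_pos:
  assumes "x \<noteq> 0"
  shows "0 < lpnorm p x"
proof -
  obtain i where i: "norm (x $ i) > 0" using assms by (metis vec_eq_iff zero_index zero_less_norm_iff)
  have "(\<Sum>j\<in>UNIV. norm (x $ j) powr e) \<noteq> 0" for e
    using i sum_pos2[of UNIV i "\<lambda>j. norm (x $ j) powr e"] by auto
  moreover have "0 < Max (range (\<lambda>j. norm (x $ j)))" using i by (auto simp: Max_gr_iff)
  ultimately show ?thesis by (simp add: lpnorm_def)
qed

lemma lpnorm_scaleR: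
  assumes "0 < p"
  shows "lpnorm p (c *\<^sub>R x) = \<bar>c\<bar> * lpnorm p x"
proof (cases p)
  case (real p')
  have "(\<Sum>i\<in>UNIV. (\<bar>c\<bar> * norm (x $ i)) powr p') = \<bar>c\<bar> powr p' * (\<Sum>i\<in>UNIV. norm (x $ i) powr p')"
    by (simp add: powr_mult sum_distrib_left)
  then show ?thesis using real assms by (simp add: lpnorm_def powr_mult powr_powr)
next
  case PInf
  have "mono (\<lambda>t::real. \<bar>c\<bar> * t)" by (auto intro!: monoI mult_left_mono)
  then have "\<bar>c\<bar> * Max (range (\<lambda>i. norm (x $ i))) = Max ((\<lambda>t. \<bar>c\<bar> * t) ` range (\<lambda>i. norm (x $ i)))"
    by (rule mono_Max_commute) auto
  then show ?thesis using PInf by (simp add: lpnorm_def image_image)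
qed (use assms in auto)

lemma lpnorm_le_embedding_const:
  fixes x :: "'a::real_normed_vector^'n::finite"
  assumes "0 < p" "0 < r"
  shows "lpnorm p x \<le> lp_embedding_const CARD('n) p r * lpnorm r x"
  unfolding lpnorm_eq_lpnorm_fun using assms by (intro lpnorm_fun_le_embedding_const) auto

lemma matrix_vector_mult_scaleR_algebra:
  fixes A :: "'a::real_algebra_1^'m::finite^'n"
  shows "A *v (c *\<^sub>R x) = c *\<^sub>R (A *v x)"
  by (simp add: vec_eq_iff matrix_vector_mult_def scaleR_sum_right mult_scaleR_right)

definition opnorm_ratio :: "ereal \<Rightarrow> ereal \<Rightarrow> ('a::real_normed_field)^'m^'n \<Rightarrow> 'a^'m \<Rightarrow> real" where
  "opnorm_ratio p q A x = lpnorm q (A *v x) / lpnorm p x"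

lemma opnorm_ratio_nonneg: "0 \<le> opnorm_ratio p q A x"
  by (simp add: opnorm_ratio_def lpnorm_nonneg)

lemma opnorm_ratio_scaleR:
  fixes A :: "'a::real_normed_field^'m::finite^'n::finite"
  assumes "c \<noteq> 0" "0 < p" "0 < q"
  shows "opnorm_ratio p q A (c *\<^sub>R x) = opnorm_ratio p q A x"
  using assms by (simp add: opnorm_ratio_def matrix_vector_mult_scaleR_algebra lpnorm_scaleR)

text \<open>By homogeneity it suffices to maximise the ratio over the compact unit sphere.\<close>
lemma opnorm_attained:
  fixes A :: "'a::{real_normed_field,heine_borel}^'m::finite^'n::finite"
  assumes p: "0 < p" and q: "0 < q"
  obtains x0 where "x0 \<noteq> 0" "opnorm p q A = opnorm_ratio p q A x0"
    "\<And>x. x \<noteq> 0 \<Longrightarrow> opnorm_ratio p q A x \<le> opnorm_ratio p q A x0"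
proof -
  let ?S = "sphere (0::'a^'m) 1"
  define y :: "'a^'m" where "y = axis undefined 1"
  have "y \<noteq> 0" by (simp add: y_def axis_eq_0_iff)
  then have "(1 / norm y) *\<^sub>R y \<in> ?S" by simp
  then have nonempty: "?S \<noteq> {}" by blast
  have "continuous_on ?S (\<lambda>x. lpnorm q (A *v x))" "continuous_on ?S (\<lambda>x. lpnorm p x)"
    unfolding matrix_vector_mult_def
    by (intro continuous_on_lpnorm p q continuous_intros; simp)+
  moreover have "lpnorm p x \<noteq> 0" if "x \<in> ?S" for x
  proof -
    from that have "x \<noteq> 0" by auto
    then show ?thesis using lpnorm_pos[of x p] by simp
  qed
  ultimately have "continuous_on ?S (opnorm_ratio p q A)"
    unfolding opnorm_ratio_def[abs_def] by (intro continuous_on_divide) auto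
  then obtain x0 where x0: "x0 \<in> ?S" "\<And>y. y \<in> ?S \<Longrightarrow> opnorm_ratio p q A y \<le> opnorm_ratio p q A x0"
    using continuous_attains_sup[OF compact_sphere nonempty] by blast
  have max: "opnorm_ratio p q A x \<le> opnorm_ratio p q A x0" if "x \<noteq> 0" for x
  proof -
    have "opnorm_ratio p q A x = opnorm_ratio p q A ((1 / norm x) *\<^sub>R x)"
      using that p q by (simp add: opnorm_ratio_scaleR)
    also have "\<dots> \<le> opnorm_ratio p q A x0" using that by (intro x0(2)) simp
    finally show ?thesis .
  qed
  moreover have "x0 \<noteq> 0" using x0(1) by auto
  moreover from this max have "opnorm p q A = opnorm_ratio p q A x0"
    unfolding opnorm_def opnorm_ratio_def[symmetric] by (intro cSup_eq_maximum) auto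
  ultimately show ?thesis using that by blast
qed

lemma opnorm_ratio_le_opnorm:
  fixes A :: "'a::{real_normed_field,heine_borel}^'m::finite^'n::finite"
  assumes "0 < p" "0 < q" "x \<noteq> 0"
  shows "opnorm_ratio p q A x \<le> opnorm p q A"
  by (rule opnorm_attained[OF assms(1,2), of A]) (use assms(3) in auto)

lemma opnorm_nonneg:
  fixes A :: "'a::{real_normed_field,heine_borel}^'m::finite^'n::finite"
  assumes "0 < p" "0 < q"
  shows "0 \<le> opnorm p q A"
  by (rule opnorm_attained[OF assms, of A]) (auto simp: opnorm_ratio_nonneg)

lemma opnorm_ratio_le_embedding_consts:
  fixes A :: "'a::real_normed_field^'m::finite^'n::finite"
  assumes "0 < p" "0 < q" "0 < r" "0 < s" "x \<noteq> 0"
  shows "opnorm_ratio r s A x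
           \<le> lp_embedding_const CARD('m) p r * lp_embedding_const CARD('n) s q * opnorm_ratio p q A x"
proof -
  define Cm where "Cm = lp_embedding_const CARD('m) p r"
  define Cn where "Cn = lp_embedding_const CARD('n) s q"
  have "Cm > 0" "Cn > 0" by (simp_all add: Cm_def Cn_def)
  have cod: "lpnorm s (A *v x) \<le> Cn * lpnorm q (A *v x)"
    unfolding Cn_def using assms by (intro lpnorm_le_embedding_const)
  have dom: "lpnorm p x \<le> Cm * lpnorm r x"
    unfolding Cm_def using assms by (intro lpnorm_le_embedding_const)
  have "lpnorm p x > 0" "lpnorm r x > 0" using lpnorm_pos \<open>x \<noteq> 0\<close> by auto
  have "opnorm_ratio r s A x \<le> Cn * lpnorm q (A *v x) / lpnorm r x"
    unfolding opnorm_ratio_def using cod \<open>lpnorm r x > 0\<close> by (simp add: divide_right_mono)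
  also have "\<dots> = Cm * Cn * lpnorm q (A *v x) / (Cm * lpnorm r x)"
    using \<open>Cm > 0\<close> by simp
  also have "\<dots> \<le> Cm * Cn * lpnorm q (A *v x) / lpnorm p x"
    using dom \<open>Cm > 0\<close> \<open>Cn > 0\<close> \<open>lpnorm p x > 0\<close> \<open>lpnorm r x > 0\<close>
    by (intro divide_left_mono) (auto simp: lpnorm_nonneg)
  finally show ?thesis by (simp add: opnorm_ratio_def Cm_def Cn_def)
qed

lemma opnorm_le_embedding_consts:
  fixes A :: "'a::{real_normed_field,heine_borel}^'m::finite^'n::finite"
  assumes "0 < p" "0 < q" "0 < r" "0 < s"
  shows "opnorm r s A
           \<le> lp_embedding_const CARD('m) p r * lp_embedding_const CARD('n) s q * opnorm p q A"
proof -
  obtain x where "x \<noteq> 0" "opnorm r s A = opnorm_ratio r s A x"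
    using opnorm_attained[OF assms(3,4)] by metis
  note this(2)
  also have "opnorm_ratio r s A x
      \<le> lp_embedding_const CARD('m) p r * lp_embedding_const CARD('n) s q * opnorm_ratio p q A x"
    using assms \<open>x \<noteq> 0\<close> by (rule opnorm_ratio_le_embedding_consts)
  also have "\<dots> \<le> lp_embedding_const CARD('m) p r * lp_embedding_const CARD('n) s q * opnorm p q A"
    using assms \<open>x \<noteq> 0\<close> by (intro mult_left_mono opnorm_ratio_le_opnorm) auto
  finally show ?thesis .
qed

text \<open>At a maximiser of the \<open>(r, s)\<close> ratio, the bound \<open>opnorm_le_embedding_consts\<close> is a chain
  of three inequalities; equality of the operator norms forces each of them to be tight.\<close>
lemma opnorm_eq_embedding_consts_extremal:
  fixes A :: "'a::{real_normed_field,heine_borel}^'m::finite^'n::finite"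
  assumes pos: "0 < p" "0 < q" "0 < r" "0 < s"
    and eq: "opnorm r s A
               = lp_embedding_const CARD('m) p r * lp_embedding_const CARD('n) s q * opnorm p q A"
    and "opnorm p q A > 0"
  obtains x where "x \<noteq> 0"
    "lpnorm p x = lp_embedding_const CARD('m) p r * lpnorm r x"
    "lpnorm s (A *v x) = lp_embedding_const CARD('n) s q * lpnorm q (A *v x)"
    "lpnorm q (A *v x) = opnorm p q A * lpnorm p x"
proof -
  define Cm where "Cm = lp_embedding_const CARD('m) p r"
  define Cn where "Cn = lp_embedding_const CARD('n) s q"
  define P where "P = opnorm p q A"
  obtain x where x: "x \<noteq> 0" "opnorm r s A = opnorm_ratio r s A x"
    using opnorm_attained[OF pos(3,4)] by metis
  define u where "u = lpnorm p x"
  define v where "v = lpnorm r x"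
  define w where "w = lpnorm q (A *v x)"
  define z where "z = lpnorm s (A *v x)"
  have "Cn > 0" "P > 0" "u > 0" "v > 0"
    using \<open>opnorm p q A > 0\<close> lpnorm_pos[OF x(1)] by (auto simp: Cn_def P_def u_def v_def)
  have cod: "z \<le> Cn * w"
    unfolding z_def w_def Cn_def using pos by (intro lpnorm_le_embedding_const)
  have dom: "u \<le> Cm * v"
    unfolding u_def v_def Cm_def using pos by (intro lpnorm_le_embedding_const)
  have "w / u \<le> P"
    using opnorm_ratio_le_opnorm[OF pos(1,2) x(1), of A] by (simp add: opnorm_ratio_def w_def u_def P_def)
  then have ratio: "w \<le> P * u" using \<open>u > 0\<close> by (simp add: field_simps)
  have "z / v = Cm * Cn * P"
    using eq x(2) by (simp add: opnorm_ratio_def z_def v_def Cm_def Cn_def P_def)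
  then have "z = Cn * (P * (Cm * v))" using \<open>v > 0\<close> by (simp add: field_simps)
  moreover have "Cn * w \<le> Cn * (P * u)" using ratio \<open>Cn > 0\<close> by simp
  moreover have "Cn * (P * u) \<le> Cn * (P * (Cm * v))" using dom \<open>Cn > 0\<close> \<open>P > 0\<close> by simp
  ultimately have "z = Cn * w" "Cn * w = Cn * (P * u)" "Cn * (P * u) = Cn * (P * (Cm * v))"
    using cod by linarith+
  then have "z = Cn * w" "w = P * u" "u = Cm * v" using \<open>Cn > 0\<close> \<open>P > 0\<close> by simp_all
  then show ?thesis using that x(1) by (simp add: u_def v_def w_def z_def Cm_def Cn_def P_def)
qed

lemma opnorm_eq_embedding_consts_transfer:
  fixes A :: "'a::{real_normed_field,heine_borel}^'m::finite^'n::finite"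
  assumes pos: "0 < p" "0 < q" "0 < r" "0 < s" "0 < r'" "0 < s'"
    and sgn: "sgn_diff p r' = sgn_diff p r" "sgn_diff q s' = sgn_diff q s"
    and eq: "opnorm r s A
               = lp_embedding_const CARD('m) p r * lp_embedding_const CARD('n) s q * opnorm p q A"
  shows "opnorm r' s' A
           = lp_embedding_const CARD('m) p r' * lp_embedding_const CARD('n) s' q * opnorm p q A"
proof (cases "opnorm p q A = 0")
  case True
  then show ?thesis
    using opnorm_le_embedding_consts[OF pos(1,2,5,6), of A] opnorm_nonneg[OF pos(5,6), of A] by simp
next
  case False
  then have "opnorm p q A > 0" using opnorm_nonneg[OF pos(1,2), of A] by simp
  with opnorm_eq_embedding_consts_extremal[OF pos(1-4) eq]
  obtain x where x: "x \<noteq> 0"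
    "lpnorm p x = lp_embedding_const CARD('m) p r * lpnorm r x"
    "lpnorm s (A *v x) = lp_embedding_const CARD('n) s q * lpnorm q (A *v x)"
    "lpnorm q (A *v x) = opnorm p q A * lpnorm p x"
    by blast
  from sgn have sgn_dom: "p < r \<longleftrightarrow> p < r'" "r < p \<longleftrightarrow> r' < p"
    and sgn_cod: "s < q \<longleftrightarrow> s' < q" "q < s \<longleftrightarrow> q < s'"
    by (simp_all add: sgn_diff_eq_iff)
  have "lpnorm p x = lp_embedding_const CARD('m) p r' * lpnorm r' x"
    using lpnorm_fun_eq_embedding_const_transfer[OF _ pos(1,3,1,5) sgn_dom x(2)[unfolded lpnorm_eq_lpnorm_fun]]
    by (simp add: lpnorm_eq_lpnorm_fun)
  moreover have "lpnorm s' (A *v x) = lp_embedding_const CARD('n) s' q * lpnorm q (A *v x)"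
    using lpnorm_fun_eq_embedding_const_transfer[OF _ pos(4,2,6,2) sgn_cod x(3)[unfolded lpnorm_eq_lpnorm_fun]]
    by (simp add: lpnorm_eq_lpnorm_fun)
  ultimately have "opnorm_ratio r' s' A x
      = lp_embedding_const CARD('m) p r' * lp_embedding_const CARD('n) s' q * opnorm p q A"
    using x(4) lpnorm_pos[OF x(1), of r'] by (simp add: opnorm_ratio_def field_simps)
  then show ?thesis
    using opnorm_ratio_le_opnorm[OF pos(5,6) x(1), of A] opnorm_le_embedding_consts[OF pos(1,2,5,6), of A]
    by linarith
qed

theorem proposition3:
  fixes p q r s r' s' :: ereal
  assumes "1 \<le> p" "1 \<le> q" "1 \<le> r" "1 \<le> s" "1 \<le> r'" "1 \<le> s'"
    and "sgn_diff p r' = sgn_diff p r" and "sgn_diff q s' = sgn_diff q s"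
  shows "(\<forall>A :: real^'m::finite^'n::finite.
            opnorm r s A = real CARD('m) powr pos_part (recip p - recip r)
                         * real CARD('n) powr pos_part (recip s - recip q) * opnorm p q A
        \<longrightarrow> opnorm r' s' A = real CARD('m) powr pos_part (recip p - recip r')
                         * real CARD('n) powr pos_part (recip s' - recip q) * opnorm p q A)
       \<and> (\<forall>A :: complex^'m::finite^'n::finite.
            opnorm r s A = real CARD('m) powr pos_part (recip p - recip r)
                         * real CARD('n) powr pos_part (recip s - recip q) * opnorm p q A
        \<longrightarrow> opnorm r' s' A = real CARD('m) powr pos_part (recip p - recip r')
                         * real CARD('n) powr pos_part (recip s' - recip q) * opnorm p q A)"
proof -
  have "0 < x" if "1 \<le> x" for x :: ereal
    using that by (cases x) auto
  then have pos: "0 < p" "0 < q" "0 < r" "0 < s" "0 < r'" "0 < s'"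
    using assms(1-6) by auto
  show ?thesis
    using opnorm_eq_embedding_consts_transfer[where 'a=real, OF pos assms(7,8)]
      opnorm_eq_embedding_consts_transfer[where 'a=complex, OF pos assms(7,8)]
    by blast
qed

end
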